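(* Let $\alpha,\beta,d>0$ and $f$ as in the context. The only nonnegative, bounded stationary solutions $(v_j,\rho_j)_{j\in\mathbb{Z}}$ of the system described in the context are $(v_j,\rho_j)\equiv(0,0)$ for all $j$ and $(v_j,\rho_j)\equiv(\beta/\alpha,1)$ for all $j$ (i.e. $v_j(x)=\beta/\alpha$ for all $x\in[0,1]$ and $\rho_j=1$).
   Context: $f\in\mathscr{C}^1([0,1])$ satisfies $f(0)=f(1)=0$ and $0<f(u)\le f'(0)u$ for $u\in(0,1)$, extended to a locally Lipschitz function on $\mathbb{R}$ negative on $\mathbb{R}\setminus[0,1]$. A stationary solution is a family $(v_j,\rho_j)_{j\in\mathbb{Z}}$ with $v_j\in\mathscr{C}^2([0,1])$ and $\rho_j\in\mathbb{R}$ such that for all $j\in\mathbb{Z}$: $d\,v_j''(x)=0$ for $x\in(0,1)$; $0=f(\rho_j)+\alpha(v_j(0)+v_{j-1}(1))-2\beta\rho_j$; $-d\,v_j'(0)+\alpha v_j(0)=\beta\rho_j$; $d\,v_j'(1)+\alpha v_j(1)=\beta\rho_{j+1}$. Nonnegative and bounded means $v_j\ge0$, $\rho_j\ge0$ and $\sup_{j,x}|v_j(x)|+\sup_j|\rho_j|<\infty$. *)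

theory Defs
  imports "HOL-Analysis.Analysis"
begin

definition C1_on_unit :: "(real \<Rightarrow> real) \<Rightarrow> (real \<Rightarrow> real) \<Rightarrow> bool" where
  "C1_on_unit f f' \<longleftrightarrow>
     (\<forall>x\<in>{0..1}. (f has_real_derivative f' x) (at x within {0..1})) \<and> continuous_on {0..1} f'"

definition locally_lipschitz_real :: "(real \<Rightarrow> real) \<Rightarrow> bool" where
  "locally_lipschitz_real f \<longleftrightarrow>
     (\<forall>x. \<exists>e>0. \<exists>L. \<forall>y\<in>ball x e. \<forall>z\<in>ball x e. \<bar>f y - f z\<bar> \<le> L * \<bar>y - z\<bar>)"

definition admissible_f :: "(real \<Rightarrow> real) \<Rightarrow> bool" where
  "admissible_f f \<longleftrightarrow>
     (\<exists>f'. C1_on_unit f f' \<and> f 0 = 0 \<and> f 1 = 0 \<and>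
        (\<forall>u\<in>{0<..<1}. 0 < f u \<and> f u \<le> f' 0 * u)) \<and>
     locally_lipschitz_real f \<and> (\<forall>u. u \<notin> {0..1} \<longrightarrow> f u < 0)"

definition stationary_solution ::
  "real \<Rightarrow> real \<Rightarrow> real \<Rightarrow> (real \<Rightarrow> real) \<Rightarrow> (int \<Rightarrow> real \<Rightarrow> real) \<Rightarrow> (int \<Rightarrow> real) \<Rightarrow> bool" where
  "stationary_solution \<alpha> \<beta> d f v \<rho> \<longleftrightarrow>
     (\<exists>v1 v2. \<forall>j::int.
        (\<forall>x\<in>{0..1}. (v j has_real_derivative v1 j x) (at x within {0..1})) \<and>
        (\<forall>x\<in>{0..1}. (v1 j has_real_derivative v2 j x) (at x within {0..1})) \<and>
        continuous_on {0..1} (v2 j) \<and>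
        (\<forall>x\<in>{0<..<1}. d * v2 j x = 0) \<and>
        0 = f (\<rho> j) + \<alpha> * (v j 0 + v (j - 1) 1) - 2 * \<beta> * \<rho> j \<and>
        - d * v1 j 0 + \<alpha> * v j 0 = \<beta> * \<rho> j \<and>
        d * v1 j 1 + \<alpha> * v j 1 = \<beta> * \<rho> (j + 1))"

definition nonneg_bounded :: "(int \<Rightarrow> real \<Rightarrow> real) \<Rightarrow> (int \<Rightarrow> real) \<Rightarrow> bool" where
  "nonneg_bounded v \<rho> \<longleftrightarrow>
     (\<forall>j. \<forall>x\<in>{0..1}. v j x \<ge> 0) \<and> (\<forall>j. \<rho> j \<ge> 0) \<and>
     (\<exists>M. \<forall>j. (\<forall>x\<in>{0..1}. \<bar>v j x\<bar> \<le> M) \<and> \<bar>\<rho> j\<bar> \<le> M)"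

end

theory Submission
  imports Defs
begin

(* Each v_j solves v'' = 0, so it is affine, and the two Robin conditions express its value and
   slope through rho_j and rho_(j+1). Substituting into the reaction condition leaves the discrete
   equation  k (rho_(j+1) - 2 rho_j + rho_(j-1)) + f rho_j = 0  with  k = d beta / (2 d + alpha).
   A sequence on Z that rises at some point and stays convex above that level grows linearly, so
   it cannot be bounded. Since f < 0 above 1, rho is strictly convex wherever rho > 1, hence
   rho <= 1; then f rho >= 0 makes rho concave, and a concave sequence bounded below on all of Z
   is constant, necessarily a zero of f in [0,1]. *)

lemma range_reflect: "range (\<lambda>i. s (- i)) = range s"
  for s :: "'a::group_add \<Rightarrow> 'b"
  by (metis surj_def minus_minus range_composition)

lemma affine_if_second_derivative_vanishes:
  fixes g g' g'' :: "real \<Rightarrow> real"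
  assumes "a \<le> b"
    and g': "\<And>x. x \<in> {a..b} \<Longrightarrow> (g has_real_derivative g' x) (at x within {a..b})"
    and g'': "\<And>x. x \<in> {a..b} \<Longrightarrow> (g' has_real_derivative g'' x) (at x within {a..b})"
    and g''_zero: "\<And>x. x \<in> {a<..<b} \<Longrightarrow> g'' x = 0"
    and x: "x \<in> {a..b}"
  shows "g' x = g' a" and "g x = g a + g' a * (x - a)"
proof -
  have g'_const: "g' y = g' a" if "y \<in> {a..b}" for y
  proof (rule has_derivative_zero_unique_strong_interval[of "{a, b}" a b g' "g' a" y])
    show "continuous_on {a..b} g'"
      using g'' by (meson DERIV_continuous continuous_at_imp_continuous_on
          continuous_on_eq_continuous_within)
    show "(g' has_derivative (\<lambda>h. 0)) (at z within {a..b})" if "z \<in> {a..b} - {a, b}" for z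
      using g''[of z] g''_zero[of z] that by (auto simp: has_field_derivative_def lambda_zero)
  qed (use that in auto)
  then show "g' x = g' a" using x .
  have "\<exists>c. \<forall>y\<in>{a..b}. g y - g' a * y = c"
  proof (rule has_field_derivative_zero_constant)
    fix y assume y: "y \<in> {a..b}"
    show "((\<lambda>y. g y - g' a * y) has_real_derivative 0) (at y within {a..b})"
      using g'[OF y] g'_const[OF y] by (auto intro!: derivative_eq_intros)
  qed (rule convex_real_interval)
  then obtain c where "\<forall>y\<in>{a..b}. g y - g' a * y = c" by blast
  then have "g x - g' a * x = g a - g' a * a"
    using x \<open>a \<le> b\<close> by simp
  then show "g x = g a + g' a * (x - a)"
    by (simp add: algebra_simps)
qed

lemma discrete_convex_rise_not_bdd_above:
  fixes s :: "int \<Rightarrow> real"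
  assumes rise: "s j\<^sub>0 < s (j\<^sub>0 + 1)"
    and convex: "\<And>j. s j\<^sub>0 < s j \<Longrightarrow> s j - s (j - 1) \<le> s (j + 1) - s j"
  shows "\<not> bdd_above (range s)"
proof
  define \<delta> where "\<delta> = s (j\<^sub>0 + 1) - s j\<^sub>0"
  have "\<delta> > 0" using rise by (simp add: \<delta>_def)
  have linear_growth:
    "\<delta> \<le> s (j\<^sub>0 + n + 1) - s (j\<^sub>0 + n) \<and> s j\<^sub>0 + (n + 1) * \<delta> \<le> s (j\<^sub>0 + n + 1)" for n :: nat
  proof (induction n)
    case 0
    then show ?case by (simp add: \<delta>_def)
  next
    case (Suc n)
    define j where "j = j\<^sub>0 + n + 1"
    have IH: "\<delta> \<le> s j - s (j - 1)" "s j\<^sub>0 + (n + 1) * \<delta> \<le> s j"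
      using Suc by (simp_all add: j_def)
    have "0 < (n + 1) * \<delta>" using \<open>\<delta> > 0\<close> by simp
    then have "s j - s (j - 1) \<le> s (j + 1) - s j"
      using IH(2) by (intro convex) linarith
    moreover have "j\<^sub>0 + int (Suc n) = j" by (simp add: j_def)
    ultimately show ?case using IH by (simp add: algebra_simps)
  qed
  assume "bdd_above (range s)"
  then obtain M where "\<And>j. s j \<le> M" by (auto simp: bdd_above_def)
  moreover obtain n where "M - s j\<^sub>0 < real n * \<delta>"
    using reals_Archimedean3[OF \<open>\<delta> > 0\<close>] by blast
  moreover have "real n * \<delta> \<le> (n + 1) * \<delta>" using \<open>\<delta> > 0\<close> by simp
  ultimately show False
    using linear_growth[of n] by (smt (verit))
qed

lemma discrete_maximum_principle:
  fixes s :: "int \<Rightarrow> real"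
  assumes bdd: "bdd_above (range s)"
    and strictly_convex: "\<And>j. c < s j \<Longrightarrow> 0 < s (j + 1) - 2 * s j + s (j - 1)"
  shows "s j \<le> c"
proof (rule ccontr)
  assume "\<not> s j \<le> c"
  then have "c < s j" by simp
  with strictly_convex have "s j < s (j + 1) \<or> s j < s (j - 1)" by fastforce
  then show False
  proof
    assume "s j < s (j + 1)"
    then have "\<not> bdd_above (range s)"
    proof (rule discrete_convex_rise_not_bdd_above)
      show "s i - s (i - 1) \<le> s (i + 1) - s i" if "s j < s i" for i
        using strictly_convex[of i] that \<open>c < s j\<close> by simp
    qed
    with bdd show False by contradiction
  next
    assume "s j < s (j - 1)"
    then have "s (- (- j)) < s (- (- j + 1))" by simp
    then have "\<not> bdd_above (range (\<lambda>i. s (- i)))"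
    proof (rule discrete_convex_rise_not_bdd_above)
      show "s (- i) - s (- (i - 1)) \<le> s (- (i + 1)) - s (- i)" if "s (- (- j)) < s (- i)" for i
      proof -
        have "- (i - 1) = - i + 1" "- (i + 1) = - i - 1" by simp_all
        with strictly_convex[of "- i"] that \<open>c < s j\<close> show ?thesis by simp
      qed
    qed
    with bdd show False by (simp add: range_reflect)
  qed
qed

lemma discrete_concave_bounded_below_mono:
  fixes s :: "int \<Rightarrow> real"
  assumes bdd: "bdd_below (range s)"
    and concave: "\<And>j. s (j + 1) - 2 * s j + s (j - 1) \<le> 0"
  shows "s j \<le> s (j + 1)"
proof (rule ccontr)
  assume "\<not> s j \<le> s (j + 1)"
  then have "- s j < - s (j + 1)" by simp
  then have "\<not> bdd_above (range (\<lambda>i. - s i))"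
  proof (rule discrete_convex_rise_not_bdd_above)
    show "- s i - - s (i - 1) \<le> - s (i + 1) - - s i" for i
      using concave[of i] by simp
  qed
  with bdd show False by (simp add: bdd_above_uminus_image)
qed

lemma discrete_concave_bounded_below_const:
  fixes s :: "int \<Rightarrow> real"
  assumes bdd: "bdd_below (range s)"
    and concave: "\<And>j. s (j + 1) - 2 * s j + s (j - 1) \<le> 0"
  shows "s j = s 0"
proof -
  have "s i \<le> s (i + 1)" for i
    using assms by (rule discrete_concave_bounded_below_mono)
  moreover have "s (i + 1) \<le> s i" for i
  proof -
    have "bdd_below (range (\<lambda>i. s (- i)))" using bdd by (simp add: range_reflect)
    then have "s (- (- i - 1)) \<le> s (- (- i - 1 + 1))"
    proof (rule discrete_concave_bounded_below_mono)
      fix j :: int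
      have "- (j - 1) = - j + 1" "- (j + 1) = - j - 1" by simp_all
      with concave[of "- j"] show "s (- (j + 1)) - 2 * s (- j) + s (- (j - 1)) \<le> 0" by simp
    qed
    then show ?thesis by (simp add: add.commute)
  qed
  ultimately have step: "s (i + 1) = s i" for i
    by (simp add: order_antisym)
  show ?thesis
  proof (induction j rule: int_induct[of _ 0])
    case (step1 i)
    then show ?case using step[of i] by simp
  next
    case (step2 i)
    then show ?case using step[of "i - 1"] by simp
  qed simp
qed

lemma discrete_reaction_equation_0_or_1:
  fixes r :: "int \<Rightarrow> real" and f :: "real \<Rightarrow> real" and k :: real
  assumes "k > 0"
    and equation: "\<And>j. k * (r (j + 1) - 2 * r j + r (j - 1)) + f (r j) = 0"
    and nonneg: "\<And>j. 0 \<le> r j" and bdd: "bdd_above (range r)"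
    and f_neg: "\<And>u. u \<notin> {0..1} \<Longrightarrow> f u < 0"
    and f_pos: "\<And>u. u \<in> {0<..<1} \<Longrightarrow> 0 < f u"
    and "f 0 = 0" "f 1 = 0"
  shows "(\<forall>j. r j = 0) \<or> (\<forall>j. r j = 1)"
proof -
  have le_1: "r j \<le> 1" for j
  proof (rule discrete_maximum_principle[OF bdd])
    fix i assume "1 < r i"
    then have "f (r i) < 0" using f_neg by simp
    with equation[of i] \<open>k > 0\<close> show "0 < r (i + 1) - 2 * r i + r (i - 1)"
      by (smt (verit) mult_le_0_iff)
  qed
  have "0 \<le> f (r j)" for j
    using nonneg[of j] le_1[of j] f_pos[of "r j"] \<open>f 0 = 0\<close> \<open>f 1 = 0\<close>
    by (cases "r j = 0 \<or> r j = 1") (auto simp: less_le)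
  then have "r (j + 1) - 2 * r j + r (j - 1) \<le> 0" for j
    using equation[of j] \<open>k > 0\<close> by (smt (verit) mult_pos_pos)
  moreover have "bdd_below (range r)" using nonneg by (intro bdd_belowI[where m = 0]) auto
  ultimately have const: "r j = r 0" for j
    using discrete_concave_bounded_below_const by blast
  then have "f (r 0) = 0" using equation[of 0] const[of 1] const[of "- 1"] by simp
  then have "r 0 = 0 \<or> r 0 = 1"
    using nonneg[of 0] le_1[of 0] f_pos[of "r 0"] by (auto simp: less_le)
  then show ?thesis using const by auto
qed

lemma stationary_solution_affine:
  assumes "d > 0" and "stationary_solution \<alpha> \<beta> d f v \<rho>"
  obtains b where
    "\<And>j x. x \<in> {0..1} \<Longrightarrow> v j x = v j 0 + b j * x"
    "\<And>j. - d * b j + \<alpha> * v j 0 = \<beta> * \<rho> j"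
    "\<And>j. d * b j + \<alpha> * (v j 0 + b j) = \<beta> * \<rho> (j + 1)"
    "\<And>j. f (\<rho> j) + \<alpha> * (v j 0 + (v (j - 1) 0 + b (j - 1))) - 2 * \<beta> * \<rho> j = 0"
proof -
  obtain v' v'' where
    v': "\<And>j x. x \<in> {0..1} \<Longrightarrow> (v j has_real_derivative v' j x) (at x within {0..1})" and
    v'': "\<And>j x. x \<in> {0..1} \<Longrightarrow> (v' j has_real_derivative v'' j x) (at x within {0..1})" and
    harmonic: "\<And>j x. x \<in> {0<..<1} \<Longrightarrow> d * v'' j x = 0" and
    reaction: "\<And>j. 0 = f (\<rho> j) + \<alpha> * (v j 0 + v (j - 1) 1) - 2 * \<beta> * \<rho> j" and
    left: "\<And>j. - d * v' j 0 + \<alpha> * v j 0 = \<beta> * \<rho> j" and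
    right: "\<And>j. d * v' j 1 + \<alpha> * v j 1 = \<beta> * \<rho> (j + 1)"
    using assms(2) unfolding stationary_solution_def by blast
  have "v'' j x = 0" if "x \<in> {0<..<1}" for j x
    using harmonic[OF that] \<open>d > 0\<close> by simp
  then have affine: "v' j x = v' j 0" "v j x = v j 0 + v' j 0 * x" if "x \<in> {0..1}" for j x
    using affine_if_second_derivative_vanishes[of 0 1 "v j" "v' j" "v'' j" x] v' v'' that by simp_all
  show thesis
  proof (rule that[of "\<lambda>j. v' j 0"])
    show "v j x = v j 0 + v' j 0 * x" if "x \<in> {0..1}" for j x
      using affine(2)[OF that] .
    show "f (\<rho> j) + \<alpha> * (v j 0 + (v (j - 1) 0 + v' (j - 1) 0)) - 2 * \<beta> * \<rho> j = 0" for j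
      using reaction[of j] affine(2)[of 1 "j - 1"] by simp
    show "d * v' j 0 + \<alpha> * (v j 0 + v' j 0) = \<beta> * \<rho> (j + 1)" for j
      using right[of j] affine[of 1 j] by simp
  qed (rule left)
qed

lemma stationary_solution_explicit:
  fixes \<alpha> \<beta> d :: real
  assumes "\<alpha> > 0" "d > 0" and "stationary_solution \<alpha> \<beta> d f v \<rho>"
  shows "d * \<beta> / (2 * d + \<alpha>) * (\<rho> (j + 1) - 2 * \<rho> j + \<rho> (j - 1)) + f (\<rho> j) = 0"
    and "x \<in> {0..1} \<Longrightarrow>
           v j x = \<beta> * \<rho> j / \<alpha> + \<beta> * (\<rho> (j + 1) - \<rho> j) / (2 * d + \<alpha>) * (d / \<alpha> + x)"
proof -
  obtain b where affine: "\<And>j x. x \<in> {0..1} \<Longrightarrow> v j x = v j 0 + b j * x"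
    and left: "\<And>j. - d * b j + \<alpha> * v j 0 = \<beta> * \<rho> j"
    and right: "\<And>j. d * b j + \<alpha> * (v j 0 + b j) = \<beta> * \<rho> (j + 1)"
    and reaction: "\<And>j. f (\<rho> j) + \<alpha> * (v j 0 + (v (j - 1) 0 + b (j - 1))) - 2 * \<beta> * \<rho> j = 0"
    using stationary_solution_affine[OF \<open>d > 0\<close> assms(3)] by blast
  have "2 * d + \<alpha> > 0" using assms by simp
  have slope_eq: "(2 * d + \<alpha>) * b i = \<beta> * (\<rho> (i + 1) - \<rho> i)" for i
    using left[of i] right[of i] by (simp add: algebra_simps)
  then have slope: "b i = \<beta> * (\<rho> (i + 1) - \<rho> i) / (2 * d + \<alpha>)" for i
    using \<open>2 * d + \<alpha> > 0\<close> by (simp add: eq_divide_eq mult.commute)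
  have value_at_0: "v i 0 = (\<beta> * \<rho> i + d * b i) / \<alpha>" for i
    using left[of i] \<open>\<alpha> > 0\<close> by (simp add: field_simps)
  have "(2 * d + \<alpha>) * (d * (b j - b (j - 1)))
      = d * ((2 * d + \<alpha>) * b j - (2 * d + \<alpha>) * b (j - 1))"
    by (simp add: algebra_simps)
  also have "\<dots> = d * \<beta> * (\<rho> (j + 1) - 2 * \<rho> j + \<rho> (j - 1))"
    unfolding slope_eq by (simp add: algebra_simps)
  finally have "d * (b j - b (j - 1))
      = d * \<beta> / (2 * d + \<alpha>) * (\<rho> (j + 1) - 2 * \<rho> j + \<rho> (j - 1))"
    using \<open>2 * d + \<alpha> > 0\<close> by (simp add: eq_divide_eq mult.commute)
  moreover have "f (\<rho> j) + d * (b j - b (j - 1)) = 0"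
    using reaction[of j] left[of j] right[of "j - 1"] by (simp add: algebra_simps)
  ultimately show "d * \<beta> / (2 * d + \<alpha>) * (\<rho> (j + 1) - 2 * \<rho> j + \<rho> (j - 1)) + f (\<rho> j) = 0"
    by simp
  show "v j x = \<beta> * \<rho> j / \<alpha> + \<beta> * (\<rho> (j + 1) - \<rho> j) / (2 * d + \<alpha>) * (d / \<alpha> + x)"
    if "x \<in> {0..1}"
  proof -
    have "v j x = \<beta> * \<rho> j / \<alpha> + b j * (d / \<alpha> + x)"
      using affine[OF that] value_at_0[of j] \<open>\<alpha> > 0\<close> by (simp add: field_simps)
    then show ?thesis by (simp only: slope)
  qed
qed

theorem theorem3p1:
  fixes \<alpha> \<beta> d :: real and f :: "real \<Rightarrow> real"
    and v :: "int \<Rightarrow> real \<Rightarrow> real" and \<rho> :: "int \<Rightarrow> real"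
  assumes "\<alpha> > 0" "\<beta> > 0" "d > 0"
    and "admissible_f f"
    and "stationary_solution \<alpha> \<beta> d f v \<rho>"
    and "nonneg_bounded v \<rho>"
  shows "(\<forall>j. \<rho> j = 0 \<and> (\<forall>x\<in>{0..1}. v j x = 0)) \<or>
         (\<forall>j. \<rho> j = 1 \<and> (\<forall>x\<in>{0..1}. v j x = \<beta> / \<alpha>))"
proof -
  from \<open>admissible_f f\<close> have f: "f 0 = 0" "f 1 = 0" "\<And>u. u \<in> {0<..<1} \<Longrightarrow> 0 < f u"
      "\<And>u. u \<notin> {0..1} \<Longrightarrow> f u < 0"
    unfolding admissible_f_def by auto
  from \<open>nonneg_bounded v \<rho>\<close> obtain M where "\<And>j. 0 \<le> \<rho> j" "\<And>j. \<bar>\<rho> j\<bar> \<le> M"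
    unfolding nonneg_bounded_def by blast
  moreover from this have "bdd_above (range \<rho>)"
    by (intro bdd_aboveI[where M = M]) (auto simp: abs_le_iff)
  moreover have "d * \<beta> / (2 * d + \<alpha>) > 0" using assms(1-3) by simp
  ultimately have "(\<forall>j. \<rho> j = 0) \<or> (\<forall>j. \<rho> j = 1)"
    using discrete_reaction_equation_0_or_1[of "d * \<beta> / (2 * d + \<alpha>)" \<rho> f] f
      stationary_solution_explicit(1)[OF assms(1,3,5)] by blast
  then show ?thesis
    using stationary_solution_explicit(2)[OF assms(1,3,5)] by auto
qed

end
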